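(* Let $(\mathbf d_n)$ be a family of degree sequences and $v_n\in[n]$. Assume, as $n\to\infty$, \[\sigma^2(\mathbf d_n)=o\Big(\frac{n}{(\log n)^3}\Big),\quad \sigma^2(\mathbf d_n)=\omega\Big(\frac{\log n}{n^{1/3}}\Big),\quad \Delta(\mathbf d_n)=o\Big(\sqrt{\frac{n\sigma^2(\mathbf d_n)}{(\log n)^3}}\Big).\] Then $\lim_{n\to\infty}\mathbb P(\mathfrak t_n(v_n)=0)=0$.
   Context: A degree sequence is $\mathbf d_n=(d_{n,1},\ldots,d_{n,n})\in\mathbb N_0^n$ with $\sum_j d_{n,j}=n$. Let $\mathfrak F(\mathbf d_n)=\{f:[n]\to[n]: |f^{-1}(\{i\})|=d_{n,i}\ \forall i\}$ and $F$ uniform on $\mathfrak F(\mathbf d_n)$. For $f:V\to V$, $v\in V$: six-length $\mathfrak s_f(v)=\min\{k\in\mathbb N: f^{(k)}(v)\in\{f^{(j)}(v):0\le j\le k-1\}\}$; tail-length $\mathfrak t_f(v)$ is the unique integer with $0\le\mathfrak t_f(v)<\mathfrak s_f(v)$ and $f^{(\mathfrak s_f(v))}(v)=f^{(\mathfrak t_f(v))}(v)$. $\mathfrak t_n(v)=\mathfrak t_F(v)$. $\Delta(\mathbf d_n)=\max_j d_{n,j}$, $\sigma^2(\mathbf d_n)=\frac1n\sum_j d_{n,j}^2-1$. $a_n=\omega(b_n)$ means $b_n=o(a_n)$. *)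

theory Defs
  imports "HOL-Analysis.Analysis" "HOL-Library.Landau_Symbols" "HOL-Library.FuncSet"
begin

text \<open>A degree sequence of length n is d :: nat \<Rightarrow> nat, read on the index set {1..n}.\<close>
definition is_degree_seq :: "nat \<Rightarrow> (nat \<Rightarrow> nat) \<Rightarrow> bool" where
  "is_degree_seq n d \<longleftrightarrow> (\<Sum>j=1..n. d j) = n"

definition deg_funs :: "nat \<Rightarrow> (nat \<Rightarrow> nat) \<Rightarrow> (nat \<Rightarrow> nat) set" where
  "deg_funs n d = {f \<in> {1..n} \<rightarrow>\<^sub>E {1..n}. \<forall>i\<in>{1..n}. card {j\<in>{1..n}. f j = i} = d i}"

definition rho_len :: "('a \<Rightarrow> 'a) \<Rightarrow> 'a \<Rightarrow> nat" where
  "rho_len f v = (LEAST k. k \<ge> 1 \<and> (f ^^ k) v \<in> {(f ^^ j) v | j. j < k})"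

definition tail_len :: "('a \<Rightarrow> 'a) \<Rightarrow> 'a \<Rightarrow> nat" where
  "tail_len f v = (THE t. t < rho_len f v \<and> (f ^^ rho_len f v) v = (f ^^ t) v)"

definition Delta :: "nat \<Rightarrow> (nat \<Rightarrow> nat) \<Rightarrow> nat" where
  "Delta n d = Max (d ` {1..n})"

definition sigma2 :: "nat \<Rightarrow> (nat \<Rightarrow> nat) \<Rightarrow> real" where
  "sigma2 n d = (\<Sum>j=1..n. real (d j) ^ 2) / real n - 1"

definition prob_tail0 :: "nat \<Rightarrow> (nat \<Rightarrow> nat) \<Rightarrow> nat \<Rightarrow> real" where
  "prob_tail0 n d v = real (card {f \<in> deg_funs n d. tail_len f v = 0}) / real (card (deg_funs n d))"

end

theory Submission
  imports Defs "HOL-Combinatorics.Multiset_Permutations" "HOL-Real_Asymp.Real_Asymp"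
begin

text \<open>If the tail length of v is 0, then v lies on a cycle v, y_1, ..., y_k, v of F. Among the
  maps with in-degrees d, those realising k + 1 prescribed arrows with distinct sources and
  distinct targets form the fraction (d_v d_{y_1} ... d_{y_k}) (n-k-1)! / n!, so
  P(t(v) = 0) is at most d_v times a sum over distinct lists that, through Beta integrals, equals
  the integral over [0,1] of the product of 1 + (d_i - 1) t over i \<noteq> v. The terms d_i - 1 sum to
  1 - d_v \<le> 0, so the estimate 1 + x \<le> exp (x - x^2 / (2 (1 + \<Delta>))) bounds the integrand by
  exp (- B t^2 / (2 (1 + \<Delta> t))) with B = \<Sum>_{i\<noteq>v} (d_i - 1)^2, which is comparable to
  n \<sigma>^2. Integrating gives P(t(v) = 0) \<le> d_v (\<pi> / \<surd>B + exp (- B / (4 \<Delta>^2))), and the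
  hypothesis on \<Delta> makes both terms vanish.\<close>

section \<open>Maps with prescribed fibre sizes\<close>

definition fibre_maps :: "'a set \<Rightarrow> 'b set \<Rightarrow> ('b \<Rightarrow> nat) \<Rightarrow> ('a \<Rightarrow> 'b) set" where
  "fibre_maps S T c = {f \<in> S \<rightarrow>\<^sub>E T. \<forall>i\<in>T. card {j\<in>S. f j = i} = c i}"

lemma deg_funs_eq_fibre_maps: "deg_funs n d = fibre_maps {1..n} {1..n} d"
  unfolding deg_funs_def fibre_maps_def ..

lemma finite_fibre_maps: "finite S \<Longrightarrow> finite T \<Longrightarrow> finite (fibre_maps S T c)"
  by (rule finite_subset[of _ "S \<rightarrow>\<^sub>E T"]) (auto simp: fibre_maps_def finite_PiE)

lemma fibre_maps_comp_transpose:
  assumes f: "f \<in> fibre_maps S T c" and a: "a \<in> S" and a': "a' \<in> S"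
  shows "f \<circ> Transposition.transpose a a' \<in> fibre_maps S T c"
proof -
  let ?\<tau> = "Transposition.transpose a a'"
  have "f \<circ> ?\<tau> \<in> S \<rightarrow>\<^sub>E T"
    using f a a' by (auto simp: fibre_maps_def PiE_def extensional_def Transposition.transpose_def)
  moreover have "{j\<in>S. (f \<circ> ?\<tau>) j = i} = ?\<tau> ` {j\<in>S. f j = i}" for i
    using a a' by (auto simp: image_iff Transposition.transpose_def)
  ultimately show ?thesis
    using f by (simp add: fibre_maps_def card_image inj_on_transpose)
qed

lemma card_fibre_maps_value_eq:
  assumes a: "a \<in> S" and a': "a' \<in> S"
  shows "card {f \<in> fibre_maps S T c. f a = b} = card {f \<in> fibre_maps S T c. f a' = b}"
proof (rule bij_betw_same_card)
  let ?\<tau> = "Transposition.transpose a a'"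
  show "bij_betw (\<lambda>f. f \<circ> ?\<tau>) {f \<in> fibre_maps S T c. f a = b} {f \<in> fibre_maps S T c. f a' = b}"
  proof (rule bij_betwI[where g = "\<lambda>f. f \<circ> ?\<tau>"])
    show "(\<lambda>f. f \<circ> ?\<tau>) \<in> {f \<in> fibre_maps S T c. f a = b} \<rightarrow> {f \<in> fibre_maps S T c. f a' = b}"
      using fibre_maps_comp_transpose[OF _ a a'] by auto
    show "(\<lambda>f. f \<circ> ?\<tau>) \<in> {f \<in> fibre_maps S T c. f a' = b} \<rightarrow> {f \<in> fibre_maps S T c. f a = b}"
      using fibre_maps_comp_transpose[OF _ a a'] by auto
  qed (simp_all add: comp_assoc)
qed

text \<open>Double counting the pairs (f, a) with f a = b, all a \<in> S contributing equally.\<close>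
lemma card_fibre_maps_value:
  assumes S: "finite S" and T: "finite T" and a: "a \<in> S" and b: "b \<in> T"
  shows "card {f \<in> fibre_maps S T c. f a = b} * card S = c b * card (fibre_maps S T c)"
proof -
  let ?F = "fibre_maps S T c"
  have "card {f \<in> ?F. f a = b} * card S = (\<Sum>a'\<in>S. card {f \<in> ?F. f a' = b})"
    using card_fibre_maps_value_eq[OF _ a, of _ T c b] by (simp add: sum.cong[OF refl])
  also have "\<dots> = (\<Sum>a'\<in>S. \<Sum>f\<in>{f \<in> ?F. f a' = b}. 1)"
    by simp
  also have "\<dots> = (\<Sum>f\<in>?F. \<Sum>a'\<in>{a'\<in>S. f a' = b}. 1)"
    using S finite_fibre_maps[OF S T] by (rule sum.swap_restrict)
  also have "\<dots> = (\<Sum>f\<in>?F. card {a'\<in>S. f a' = b})"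
    by simp
  also have "\<dots> = c b * card ?F"
    using b by (simp add: fibre_maps_def)
  finally show ?thesis .
qed

lemma bij_betw_fibre_maps_update:
  assumes a: "a \<in> S" and b: "b \<in> T" and cb: "1 \<le> c b" and S: "finite S"
  shows "bij_betw (\<lambda>g. g(a := b)) (fibre_maps (S - {a}) T (c(b := c b - 1)))
           {f \<in> fibre_maps S T c. f a = b}"
proof (rule bij_betwI[where g = "\<lambda>f. f(a := undefined)"])
  let ?c' = "c(b := c b - 1)"
  show "(\<lambda>g. g(a := b)) \<in> fibre_maps (S - {a}) T ?c' \<rightarrow> {f \<in> fibre_maps S T c. f a = b}"
  proof
    fix g assume g: "g \<in> fibre_maps (S - {a}) T ?c'"
    have "g(a := b) \<in> S \<rightarrow>\<^sub>E T"
      using PiE_fun_upd[where y=b and T="\<lambda>_. T" and x=a and f=g and S="S - {a}"] g b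
      by (simp add: fibre_maps_def insert_absorb[OF a])
    moreover have "card {j\<in>S. (g(a := b)) j = i} = c i" if i: "i \<in> T" for i
    proof -
      have old: "card {j\<in>S - {a}. g j = i} = ?c' i" using g i by (simp add: fibre_maps_def)
      show ?thesis
      proof (cases "i = b")
        case True
        then have "{j\<in>S. (g(a := b)) j = i} = insert a {j\<in>S - {a}. g j = i}" using a by auto
        then show ?thesis using old cb S True by simp
      next
        case False
        then have "{j\<in>S. (g(a := b)) j = i} = {j\<in>S - {a}. g j = i}" by auto
        then show ?thesis using old False by simp
      qed
    qed
    ultimately show "g(a := b) \<in> {f \<in> fibre_maps S T c. f a = b}"
      by (simp add: fibre_maps_def)
  qed
  show "(\<lambda>f. f(a := undefined)) \<in> {f \<in> fibre_maps S T c. f a = b} \<rightarrow> fibre_maps (S - {a}) T ?c'"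
  proof
    fix f assume f: "f \<in> {f \<in> fibre_maps S T c. f a = b}"
    have "f(a := undefined) \<in> (S - {a}) \<rightarrow>\<^sub>E T"
      using fun_upd_in_PiE[where x=a and S="S - {a}" and f=f and T="\<lambda>_. T"] f
      by (simp add: fibre_maps_def insert_absorb[OF a])
    moreover have "card {j\<in>S - {a}. (f(a := undefined)) j = i} = ?c' i" if i: "i \<in> T" for i
    proof -
      have e: "{j\<in>S - {a}. (f(a := undefined)) j = i} = {j\<in>S. f j = i} - {a}" by auto
      have "card {j\<in>S. f j = i} = c i" using f i by (simp add: fibre_maps_def)
      then show ?thesis unfolding e using f S a by (cases "i = b") auto
    qed
    ultimately show "f(a := undefined) \<in> fibre_maps (S - {a}) T ?c'"
      by (simp add: fibre_maps_def)
  qed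
next
  fix g assume "g \<in> fibre_maps (S - {a}) T (c(b := c b - 1))"
  then have "g a = undefined" by (intro PiE_arb[of g "S - {a}"]) (auto simp: fibre_maps_def)
  then show "(g(a := b))(a := undefined) = g" by (simp add: fun_upd_idem)
next
  fix f assume "f \<in> {f \<in> fibre_maps S T c. f a = b}"
  then show "(f(a := undefined))(a := b) = f" by auto
qed

lemma card_fibre_maps_prescribed_Cons:
  assumes S: "finite S" and a: "a \<in> S" and b: "b \<in> T" and cb: "1 \<le> c b"
    and a_ps: "a \<notin> fst ` set ps"
  shows "card {f \<in> fibre_maps S T c. \<forall>(x, y)\<in>set ((a, b) # ps). f x = y}
       = card {g \<in> fibre_maps (S - {a}) T (c(b := c b - 1)). \<forall>(x, y)\<in>set ps. g x = y}"
proof -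
  let ?P = "\<lambda>f. \<forall>(x, y)\<in>set ps. f x = y"
  let ?F = "fibre_maps S T c"
  let ?F' = "fibre_maps (S - {a}) T (c(b := c b - 1))"
  have bij: "bij_betw (\<lambda>g. g(a := b)) ?F' {f \<in> ?F. f a = b}"
    using a b cb S by (rule bij_betw_fibre_maps_update)
  have "?P (g(a := b)) \<longleftrightarrow> ?P g" for g :: "'a \<Rightarrow> 'b"
    using a_ps by (force simp: case_prod_beta)
  then have "{g \<in> ?F'. ?P g} = {g \<in> ?F'. ?P (g(a := b))}"
    by (simp only:)
  then have "(\<lambda>g. g(a := b)) ` {g \<in> ?F'. ?P g} = {f \<in> (\<lambda>g. g(a := b)) ` ?F'. ?P f}"
    by (simp only: Compr_image_eq)
  then have "bij_betw (\<lambda>g. g(a := b)) {g \<in> ?F'. ?P g} {f \<in> {f \<in> ?F. f a = b}. ?P f}"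
    using bij by (intro bij_betw_subset[OF bij]) (auto simp: bij_betw_def)
  moreover have "{f \<in> ?F. \<forall>(x, y)\<in>set ((a, b) # ps). f x = y} = {f \<in> {f \<in> ?F. f a = b}. ?P f}"
    by auto
  ultimately show ?thesis
    by (simp only: bij_betw_same_card[symmetric])
qed

lemma card_fibre_maps_prescribed:
  assumes "finite S" "finite T" "set (map fst ps) \<subseteq> S" "set (map snd ps) \<subseteq> T"
    "distinct (map fst ps)" "distinct (map snd ps)"
  shows "card {f \<in> fibre_maps S T c. \<forall>(x, y)\<in>set ps. f x = y} * fact (card S)
         = prod_list (map (c \<circ> snd) ps) * card (fibre_maps S T c) * fact (card S - length ps)"
  using assms
proof (induction ps arbitrary: S c)
  case Nil
  then show ?case by simp
next
  case (Cons p ps)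
  obtain a b where p: "p = (a, b)" by (cases p)
  have S: "finite S" and T: "finite T" and a: "a \<in> S" and b: "b \<in> T"
    and a_ps: "a \<notin> fst ` set ps" and b_ps: "b \<notin> snd ` set ps"
    using Cons.prems p by auto
  let ?P = "\<lambda>f. \<forall>(x, y)\<in>set ps. f x = y"
  let ?F = "fibre_maps S T c"
  show ?case
  proof (cases "c b = 0")
    case True
    have "f a \<noteq> b" if "f \<in> ?F" for f
    proof
      assume "f a = b"
      then have "a \<in> {j\<in>S. f j = b}" using a by simp
      moreover have "card {j\<in>S. f j = b} = 0" using that b True by (simp add: fibre_maps_def)
      ultimately show False using S by auto
    qed
    then have empty: "{f \<in> ?F. \<forall>(x, y)\<in>set (p # ps). f x = y} = {}" using p by auto
    show ?thesis unfolding empty using True p by simp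
  next
    case False
    let ?c' = "c(b := c b - 1)"
    let ?F' = "fibre_maps (S - {a}) T ?c'"
    have card_eq: "card {f \<in> ?F. \<forall>(x, y)\<in>set (p # ps). f x = y} = card {g \<in> ?F'. ?P g}"
      unfolding p using False by (intro card_fibre_maps_prescribed_Cons[OF S a b _ a_ps]) simp
    have IH: "card {g \<in> ?F'. ?P g} * fact (card (S - {a}))
        = prod_list (map (?c' \<circ> snd) ps) * card ?F' * fact (card (S - {a}) - length ps)"
      by (rule Cons.IH) (use Cons.prems p a_ps in auto)
    have map_eq: "map (?c' \<circ> snd) ps = map (c \<circ> snd) ps"
      using b_ps by (auto simp: image_iff)
    have "bij_betw (\<lambda>g. g(a := b)) ?F' {f \<in> ?F. f a = b}"
      using a b _ S by (rule bij_betw_fibre_maps_update) (use False in simp)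
    then have "card ?F' = card {f \<in> ?F. f a = b}"
      by (rule bij_betw_same_card)
    then have value_eq: "card ?F' * card S = c b * card ?F"
      using card_fibre_maps_value[OF S T a b] by simp
    have fact_eq: "fact (card S) = card S * fact (card (S - {a}))"
      using fact_reduce[where 'a=nat, of "card S"] a S by (auto simp: card_gt_0_iff)
    have length_eq: "card S - length (p # ps) = card (S - {a}) - length ps"
      using a S by simp
    have "card {f \<in> ?F. \<forall>(x, y)\<in>set (p # ps). f x = y} * fact (card S)
        = card S * (card {g \<in> ?F'. ?P g} * fact (card (S - {a})))"
      unfolding card_eq fact_eq by (simp only: mult_ac)
    also have "\<dots> = prod_list (map (c \<circ> snd) ps) * (card ?F' * card S) * fact (card (S - {a}) - length ps)"
      unfolding IH map_eq by (simp only: mult_ac)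
    also have "\<dots> = prod_list (map (c \<circ> snd) (p # ps)) * card ?F * fact (card S - length (p # ps))"
      unfolding value_eq length_eq using p by (simp add: mult_ac)
    finally show ?thesis .
  qed
qed

section \<open>Tail length and cycles\<close>

lemma funpow_in_invariant_set: "f ` A \<subseteq> A \<Longrightarrow> v \<in> A \<Longrightarrow> (f ^^ k) v \<in> A"
  by (induction k) auto

lemma rho_len_orbit:
  fixes f :: "'a \<Rightarrow> 'a"
  assumes A: "finite A" "f ` A \<subseteq> A" and v: "v \<in> A"
  shows "1 \<le> rho_len f v" and "inj_on (\<lambda>k. (f ^^ k) v) {..<rho_len f v}"
    and "\<exists>t < rho_len f v. (f ^^ rho_len f v) v = (f ^^ t) v"
proof -
  define P where "P k \<longleftrightarrow> k \<ge> 1 \<and> (f ^^ k) v \<in> {(f ^^ j) v | j. j < k}" for k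
  have rho: "rho_len f v = (LEAST k. P k)"
    unfolding rho_len_def P_def ..
  have "\<not> inj_on (\<lambda>k. (f ^^ k) v) {..card A}"
  proof
    assume "inj_on (\<lambda>k. (f ^^ k) v) {..card A}"
    then have "card {..card A} \<le> card A"
      using A v by (intro card_inj_on_le) (auto intro: funpow_in_invariant_set)
    then show False by simp
  qed
  then obtain i j where "i < j" "(f ^^ j) v = (f ^^ i) v"
    by (metis (no_types, lifting) inj_on_def linorder_neqE_nat)
  then have "P j" unfolding P_def by auto
  then have P_rho: "P (rho_len f v)"
    unfolding rho by (rule LeastI)
  then show "1 \<le> rho_len f v" and "\<exists>t < rho_len f v. (f ^^ rho_len f v) v = (f ^^ t) v"
    unfolding P_def by auto
  show "inj_on (\<lambda>k. (f ^^ k) v) {..<rho_len f v}"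
  proof (rule linorder_inj_onI)
    fix i j assume "i < j" "j \<in> {..<rho_len f v}"
    then show "(f ^^ i) v \<noteq> (f ^^ j) v"
      using not_less_Least[of j P] unfolding rho P_def by auto
  qed auto
qed

lemma tail_len_eqI:
  assumes "inj_on (\<lambda>k. (f ^^ k) v) {..<rho_len f v}"
    and "t < rho_len f v" and "(f ^^ rho_len f v) v = (f ^^ t) v"
  shows "tail_len f v = t"
  unfolding tail_len_def
proof (rule the_equality)
  fix t' assume "t' < rho_len f v \<and> (f ^^ rho_len f v) v = (f ^^ t') v"
  then show "t' = t"
    using assms by (auto dest: inj_onD)
qed (use assms in simp)

lemma tail_len_0_imp_cycle:
  fixes f :: "'a \<Rightarrow> 'a"
  assumes A: "finite A" "f ` A \<subseteq> A" and v: "v \<in> A" and tail: "tail_len f v = 0"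
  obtains ys where "distinct ys" "set ys \<subseteq> A - {v}"
    and "\<forall>(x, y)\<in>set (zip (v # ys) (ys @ [v])). f x = y"
proof
  define g where "g k = (f ^^ k) v" for k
  define \<rho> where "\<rho> = rho_len f v"
  have \<rho>1: "1 \<le> \<rho>" and inj: "inj_on g {..<\<rho>}"
    using rho_len_orbit[OF A v] unfolding g_def \<rho>_def by auto
  obtain t where "t < \<rho>" "g \<rho> = g t"
    using rho_len_orbit(3)[OF A v] unfolding g_def \<rho>_def by auto
  with inj tail have "g \<rho> = v"
    using tail_len_eqI[of f v t] unfolding g_def \<rho>_def by simp
  define ys where "ys = map g [1..<\<rho>]"
  have cycle: "v # ys = map g [0..<\<rho>]"
    using \<rho>1 by (simp add: ys_def g_def upt_conv_Cons)
  have "distinct (map g [0..<\<rho>])"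
    using inj by (simp add: distinct_map atLeast0LessThan)
  then have "distinct (v # ys)"
    unfolding cycle .
  then show "distinct ys" by simp
  have "set ys \<subseteq> A"
    using A v by (auto simp: ys_def g_def funpow_in_invariant_set)
  then show "set ys \<subseteq> A - {v}"
    using \<open>distinct (v # ys)\<close> by auto
  have "ys @ [v] = map g [1..<Suc \<rho>]"
    using \<rho>1 \<open>g \<rho> = v\<close> by (simp add: ys_def)
  also have "\<dots> = map (g \<circ> Suc) [0..<\<rho>]"
    unfolding map_map[symmetric] map_Suc_upt by simp
  finally show "\<forall>(x, y)\<in>set (zip (v # ys) (ys @ [v])). f x = y"
    unfolding cycle by (auto simp: zip_map_map zip_same_conv_map g_def)
qed

lemma card_tail_len_0_le:
  fixes F :: "('a \<Rightarrow> 'a) set"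
  assumes A: "finite A" "v \<in> A" and F: "finite F" "\<And>f. f \<in> F \<Longrightarrow> f ` A \<subseteq> A"
  shows "card {f \<in> F. tail_len f v = 0}
    \<le> (\<Sum>ys | distinct ys \<and> set ys \<subseteq> A - {v}.
          card {f \<in> F. \<forall>(x, y)\<in>set (zip (v # ys) (ys @ [v])). f x = y})"
proof -
  define L where "L = {ys. distinct ys \<and> set ys \<subseteq> A - {v}}"
  define C where "C ys = {f \<in> F. \<forall>(x, y)\<in>set (zip (v # ys) (ys @ [v])). f x = y}" for ys
  have L: "finite L"
    unfolding L_def using finite_subset_distinct[of "A - {v}"] A by (simp add: conj_commute)
  have "{f \<in> F. tail_len f v = 0} \<subseteq> (\<Union>ys\<in>L. C ys)"
  proof
    fix f assume f: "f \<in> {f \<in> F. tail_len f v = 0}"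
    then obtain ys where "distinct ys" "set ys \<subseteq> A - {v}"
        "\<forall>(x, y)\<in>set (zip (v # ys) (ys @ [v])). f x = y"
      using tail_len_0_imp_cycle[OF A(1) F(2) A(2)] by blast
    then show "f \<in> (\<Union>ys\<in>L. C ys)"
      using f by (auto simp: L_def C_def)
  qed
  then have "card {f \<in> F. tail_len f v = 0} \<le> card (\<Union>ys\<in>L. C ys)"
    using F L by (intro card_mono finite_UN_I) (auto simp: C_def)
  also have "\<dots> \<le> (\<Sum>ys\<in>L. card (C ys))"
    by (rule card_UN_le[OF L])
  finally show ?thesis
    unfolding L_def C_def .
qed

section \<open>Beta integrals and an exponential estimate\<close>

lemma sum_distinct_lists_eq_sum_Pow:
  fixes h :: "'a set \<Rightarrow> 'b::semiring_char_0"
  assumes M: "finite M"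
  shows "(\<Sum>ys | distinct ys \<and> set ys \<subseteq> M. h (set ys)) = (\<Sum>J\<in>Pow M. fact (card J) * h J)"
proof -
  have "{ys. distinct ys \<and> set ys \<subseteq> M} = (\<Union>J\<in>Pow M. permutations_of_set J)"
    by (auto simp: permutations_of_set_def)
  then have "(\<Sum>ys | distinct ys \<and> set ys \<subseteq> M. h (set ys))
      = (\<Sum>ys\<in>(\<Union>J\<in>Pow M. permutations_of_set J). h (set ys))"
    by (simp only:)
  also have "\<dots> = (\<Sum>J\<in>Pow M. \<Sum>ys\<in>permutations_of_set J. h (set ys))"
  proof (rule sum.UNION_disjoint)
    show "\<forall>J\<in>Pow M. \<forall>J'\<in>Pow M. J \<noteq> J' \<longrightarrow> permutations_of_set J \<inter> permutations_of_set J' = {}"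
      by (auto simp: permutations_of_set_def)
  qed (use M in simp_all)
  also have "\<dots> = (\<Sum>J\<in>Pow M. \<Sum>ys\<in>permutations_of_set J. h J)"
    by (intro sum.cong refl) (simp add: permutations_of_set_def)
  also have "\<dots> = (\<Sum>J\<in>Pow M. fact (card J) * h J)"
    using M by (intro sum.cong refl) (auto simp: finite_subset)
  finally show ?thesis .
qed

lemma has_integral_power_mult_power:
  "((\<lambda>t::real. t ^ j * (1 - t) ^ m) has_integral (fact j * fact m / fact (j + m + 1))) {0..1}"
proof -
  have Gamma_nat: "Gamma (real k + 1) = fact k" for k
    using Gamma_of_int[of "int k + 1"] by simp
  have "((\<lambda>t. t powr (real j + 1 - 1) * (1 - t) powr (real m + 1 - 1))
      has_integral Beta (real j + 1) (real m + 1)) {0..1}"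
    by (rule has_integral_Beta_real) auto
  then have "((\<lambda>t. t powr real j * (1 - t) powr real m) has_integral Beta (real j + 1) (real m + 1)) {0<..<1}"
    by (simp add: has_integral_Icc_iff_Ioo)
  then have "((\<lambda>t::real. t ^ j * (1 - t) ^ m) has_integral Beta (real j + 1) (real m + 1)) {0<..<1}"
    by (rule has_integral_eq[rotated]) (auto simp: powr_realpow)
  moreover have "Beta (real j + 1) (real m + 1) = fact j * fact m / fact (j + m + 1)"
    unfolding Beta_def using Gamma_nat[of j] Gamma_nat[of m] Gamma_nat[of "j + m + 1"]
    by (simp add: add_ac)
  ultimately show ?thesis by (simp add: has_integral_Icc_iff_Ioo)
qed

text \<open>Expanding the product, each subset J \<subseteq> M contributes a Beta integral.\<close>
lemma has_integral_prod_affine: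
  fixes w :: "'a \<Rightarrow> real"
  assumes M: "finite M"
  shows "((\<lambda>t. \<Prod>i\<in>M. w i * t + (1 - t)) has_integral
      (\<Sum>J\<in>Pow M. (\<Prod>i\<in>J. w i) * (fact (card J) * fact (card M - card J) / fact (card M + 1)))) {0..1}"
proof -
  have expand: "(\<Prod>i\<in>M. w i * t + (1 - t))
      = (\<Sum>J\<in>Pow M. (\<Prod>i\<in>J. w i) * (t ^ card J * (1 - t) ^ (card M - card J)))" for t
  proof -
    have "(\<Prod>i\<in>M. w i * t + (1 - t)) = (\<Sum>J\<in>Pow M. (\<Prod>i\<in>J. w i * t) * (\<Prod>i\<in>M - J. 1 - t))"
      by (rule prod_add[OF M])
    also have "\<dots> = (\<Sum>J\<in>Pow M. (\<Prod>i\<in>J. w i) * (t ^ card J * (1 - t) ^ (card M - card J)))"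
      using M by (intro sum.cong refl) (auto simp: prod.distrib card_Diff_subset finite_subset)
    finally show ?thesis .
  qed
  have "((\<lambda>t. \<Sum>J\<in>Pow M. (\<Prod>i\<in>J. w i) * (t ^ card J * (1 - t) ^ (card M - card J))) has_integral
      (\<Sum>J\<in>Pow M. (\<Prod>i\<in>J. w i) * (fact (card J) * fact (card M - card J) / fact (card M + 1)))) {0..1}"
  proof (intro has_integral_sum has_integral_mult_right ballI)
    fix J assume "J \<in> Pow M"
    then have "card J + (card M - card J) + 1 = card M + 1"
      using M by (simp add: card_mono)
    then show "((\<lambda>t::real. t ^ card J * (1 - t) ^ (card M - card J)) has_integral
        (fact (card J) * fact (card M - card J) / fact (card M + 1))) {0..1}"
      using has_integral_power_mult_power[of "card J" "card M - card J"] by simp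
  qed (use M in simp)
  then show ?thesis
    unfolding expand .
qed

lemma one_add_le_exp_sub_square:
  fixes x M :: real
  assumes M: "0 \<le> M" and x1: "-1 \<le> x" and xM: "x \<le> M"
  shows "1 + x \<le> exp (x - x^2 / (2 * (1 + M)))"
proof (cases "x = -1")
  case True then show ?thesis by simp
next
  case False
  then have xg: "x > -1" using x1 by simp
  define g where "g y = y - y^2 / (2 * (1 + M)) - ln (1 + y)" for y :: real
  have M1: "1 + M > 0" using M by simp
  have g': "(g has_real_derivative y * (M - y) / ((1 + M) * (1 + y))) (at y)" if "y > -1" for y
  proof -
    have "(g has_real_derivative 1 - 2 * y / (2 * (1 + M)) - 1 / (1 + y)) (at y)"
      unfolding g_def using that M1 by (auto intro!: derivative_eq_intros)
    moreover have "2 * y / (2 * (1 + M)) = y / (1 + M)" by (rule mult_divide_mult_cancel_left) simp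
    moreover have "1 - y / (1 + M) - 1 / (1 + y) = y * (M - y) / ((1 + M) * (1 + y))"
      using that M by (simp add: field_simps)
    ultimately show ?thesis by simp
  qed
  have "g 0 \<le> g x"
  proof (cases "x \<ge> 0")
    case True
    show ?thesis
    proof (rule DERIV_nonneg_imp_nondecreasing[OF True])
      fix y assume "0 \<le> y" "y \<le> x"
      then show "\<exists>z. (g has_real_derivative z) (at y) \<and> 0 \<le> z"
        using g'[of y] xM M by (intro exI[of _ "y * (M - y) / ((1 + M) * (1 + y))"]) auto
    qed
  next
    case False
    have "- g x \<le> - g 0"
    proof (rule DERIV_nonneg_imp_nondecreasing[where f = "\<lambda>y. - g y"])
      show "x \<le> 0" using False by simp
      fix y assume y: "x \<le> y" "y \<le> 0"
      then have "y > -1" using xg by simp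
      moreover have "y * (M - y) / ((1 + M) * (1 + y)) \<le> 0"
        using y \<open>y > -1\<close> M by (intro divide_nonpos_pos mult_nonpos_nonneg) auto
      ultimately show "\<exists>z. ((\<lambda>y. - g y) has_real_derivative z) (at y) \<and> 0 \<le> z"
        using DERIV_minus[OF g'] by fastforce
    qed
    then show ?thesis by simp
  qed
  then have "ln (1 + x) \<le> x - x^2 / (2 * (1 + M))" unfolding g_def by simp
  then have "exp (ln (1 + x)) \<le> exp (x - x^2 / (2 * (1 + M)))" by simp
  then show ?thesis using xg by simp
qed

text \<open>Split at D t = 1: below, the exponent is at least B t^2 / 4; above, at least B / (4 D^2).\<close>
lemma exp_neg_quadratic_le:
  fixes B D t :: real
  assumes B: "0 \<le> B" and D: "1 \<le> D" and t: "0 \<le> t" "t \<le> 1"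
  shows "exp (- (B * t^2 / (2 * (1 + D * t)))) \<le> 1 / (1 + B * t^2 / 4) + exp (- (B / (4 * D^2)))"
proof (cases "D * t \<le> 1")
  case True
  have "B * t^2 / 4 \<le> B * t^2 / (2 * (1 + D * t))"
    using True B t D by (intro divide_left_mono mult_nonneg_nonneg) (auto simp: add_pos_nonneg)
  then have "exp (- (B * t^2 / (2 * (1 + D * t)))) \<le> exp (- (B * t^2 / 4))" by simp
  also have "\<dots> \<le> 1 / (1 + B * t^2 / 4)"
    using exp_ge_add_one_self[of "B * t^2 / 4"] B by (simp add: exp_minus field_simps add_pos_nonneg)
  finally show ?thesis by (smt (verit) exp_gt_zero)
next
  case False
  have "2 * (1 + D * t) \<le> 4 * D * t" using False by simp
  also have "\<dots> \<le> 4 * D^2 * t^2"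
    using False D t by (simp add: power2_eq_square) (smt (verit) mult_le_cancel_left1 mult.assoc mult.commute)
  finally have "B / (4 * D^2) \<le> B * t^2 / (2 * (1 + D * t))"
    using B D t False by (simp add: divide_simps mult_left_mono mult.commute mult.left_commute)
  then have "exp (- (B * t^2 / (2 * (1 + D * t)))) \<le> exp (- (B / (4 * D^2)))" by simp
  moreover have "0 \<le> 1 / (1 + B * t^2 / 4)" using B by simp
  ultimately show ?thesis by linarith
qed

lemma has_integral_inverse_one_add_square:
  fixes B :: real
  assumes B: "B > 0"
  shows "((\<lambda>t. 1 / (1 + B * t^2 / 4)) has_integral (2 / sqrt B * arctan (sqrt B / 2))) {0..1}"
proof -
  have "((\<lambda>t. 1 / (1 + B * t^2 / 4)) has_integral
      (2 / sqrt B * arctan (sqrt B * 1 / 2) - 2 / sqrt B * arctan (sqrt B * 0 / 2))) {0..1}"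
  proof (rule fundamental_theorem_of_calculus)
    fix x :: real assume "x \<in> {0..1}"
    have deriv: "((\<lambda>x. 2 / sqrt B * arctan (sqrt B * x / 2)) has_real_derivative
        (2 / sqrt B * (inverse (1 + (sqrt B * x / 2)^2) * (sqrt B / 2)))) (at x within {0..1})"
      using B by (auto intro!: derivative_eq_intros) (simp add: mult.assoc)
    have square: "(sqrt B * x / 2)^2 = B * x^2 / 4" using B by (simp add: power_mult_distrib power_divide)
    have cancel: "2 / sqrt B * (sqrt B / 2) = 1" using B by simp
    have "2 / sqrt B * (inverse (1 + (sqrt B * x / 2)^2) * (sqrt B / 2))
        = (2 / sqrt B * (sqrt B / 2)) * inverse (1 + (sqrt B * x / 2)^2)"
      by (simp only: ac_simps)
    also have "\<dots> = 1 / (1 + B * x^2 / 4)"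
      by (simp only: square cancel mult_1 inverse_eq_divide)
    finally have "((\<lambda>x. 2 / sqrt B * arctan (sqrt B * x / 2)) has_real_derivative
        (1 / (1 + B * x^2 / 4))) (at x within {0..1})"
      using deriv by (simp only:)
    then show "((\<lambda>x. 2 / sqrt B * arctan (sqrt B * x / 2)) has_vector_derivative
        (1 / (1 + B * x^2 / 4))) (at x within {0..1})"
      by (simp only: has_real_derivative_iff_has_vector_derivative)
  qed simp
  then show ?thesis by simp
qed

lemma prod_affine_le_exp:
  fixes w :: "'a \<Rightarrow> real"
  assumes M: "finite M" and w: "\<And>i. i \<in> M \<Longrightarrow> 0 \<le> w i \<and> w i \<le> D" and D: "1 \<le> D"
    and mean: "(\<Sum>i\<in>M. w i - 1) \<le> 0" and t: "0 \<le> t" "t \<le> 1"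
  shows "(\<Prod>i\<in>M. w i * t + (1 - t)) \<le> exp (- ((\<Sum>i\<in>M. (w i - 1)^2) * t^2 / (2 * (1 + D * t))))"
proof -
  define q where "q = 2 * (1 + D * t)"
  have "(\<Prod>i\<in>M. w i * t + (1 - t)) \<le> (\<Prod>i\<in>M. exp ((w i - 1) * t - ((w i - 1) * t)^2 / q))"
  proof (rule prod_mono)
    fix i assume "i \<in> M"
    then have wi: "0 \<le> w i" "w i \<le> D" using w by auto
    have "w i * t + (1 - t) = 1 + (w i - 1) * t" by (simp add: algebra_simps)
    also have "\<dots> \<le> exp ((w i - 1) * t - ((w i - 1) * t)^2 / q)"
      unfolding q_def
    proof (rule one_add_le_exp_sub_square)
      show "0 \<le> D * t" using D t by simp
      show "-1 \<le> (w i - 1) * t" using mult_nonneg_nonneg[OF wi(1) t(1)] t by (simp add: algebra_simps)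
      show "(w i - 1) * t \<le> D * t" using wi t by (intro mult_right_mono) auto
    qed
    finally show "0 \<le> w i * t + (1 - t) \<and> w i * t + (1 - t) \<le> exp ((w i - 1) * t - ((w i - 1) * t)^2 / q)"
      using wi t by simp
  qed
  also have "\<dots> = exp ((\<Sum>i\<in>M. w i - 1) * t - (\<Sum>i\<in>M. (w i - 1)^2) * t^2 / q)"
  proof -
    have "(\<Sum>i\<in>M. (w i - 1) * t) = (\<Sum>i\<in>M. w i - 1) * t"
      by (rule sum_distrib_right[symmetric])
    moreover have "(\<Sum>i\<in>M. ((w i - 1) * t)^2 / q) = (\<Sum>i\<in>M. (w i - 1)^2) * t^2 / q"
      by (simp add: power_mult_distrib sum_divide_distrib sum_distrib_right)
    ultimately show ?thesis
      by (simp add: exp_sum[OF M, symmetric] sum_subtractf)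
  qed
  also have "\<dots> \<le> exp (- ((\<Sum>i\<in>M. (w i - 1)^2) * t^2 / q))"
    using mean t by (simp add: mult_nonpos_nonneg)
  finally show ?thesis unfolding q_def .
qed

lemma integral_prod_affine_le:
  fixes w :: "'a \<Rightarrow> real"
  assumes M: "finite M" and w: "\<And>i. i \<in> M \<Longrightarrow> 0 \<le> w i \<and> w i \<le> D" and D: "1 \<le> D"
    and mean: "(\<Sum>i\<in>M. w i - 1) \<le> 0"
    and B_def: "B = (\<Sum>i\<in>M. (w i - 1)^2)" and B: "0 < B"
    and I: "((\<lambda>t. \<Prod>i\<in>M. w i * t + (1 - t)) has_integral I) {0..1}"
  shows "I \<le> pi / sqrt B + exp (- (B / (4 * D^2)))"
proof -
  define e where "e = exp (- (B / (4 * D^2)))"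
  have pointwise: "(\<Prod>i\<in>M. w i * t + (1 - t)) \<le> 1 / (1 + B * t^2 / 4) + e" if "t \<in> {0..1}" for t
  proof -
    have "(\<Prod>i\<in>M. w i * t + (1 - t)) \<le> exp (- (B * t^2 / (2 * (1 + D * t))))"
      using prod_affine_le_exp[OF M w D mean, of t] that unfolding B_def by simp
    also have "\<dots> \<le> 1 / (1 + B * t^2 / 4) + e"
      unfolding e_def using B D that by (intro exp_neg_quadratic_le) auto
    finally show ?thesis .
  qed
  have majorant: "((\<lambda>t. 1 / (1 + B * t^2 / 4) + e) has_integral (2 / sqrt B * arctan (sqrt B / 2) + e))
      {0..1}"
    using has_integral_add[OF has_integral_inverse_one_add_square[OF B] has_integral_const_real[of e 0 1]]
    by simp
  have "I \<le> 2 / sqrt B * arctan (sqrt B / 2) + e"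
    by (rule has_integral_le[OF I majorant pointwise])
  also have "\<dots> \<le> pi / sqrt B + e"
    using arctan_ubound[of "sqrt B / 2"] B by (simp add: field_simps)
  finally show ?thesis unfolding e_def .
qed

section \<open>Probability of tail length zero\<close>

lemma card_fibre_maps_cycle:
  fixes d :: "nat \<Rightarrow> nat"
  assumes v: "v \<in> {1..n}" and ys: "distinct ys" "set ys \<subseteq> {1..n} - {v}"
  shows "real (card {f \<in> fibre_maps {1..n} {1..n} d. \<forall>(x, y)\<in>set (zip (v # ys) (ys @ [v])). f x = y})
           * fact n
         = real (d v) * (\<Prod>i\<in>set ys. real (d i)) * real (card (fibre_maps {1..n} {1..n} d))
           * fact (n - 1 - length ys)"
proof -
  let ?ps = "zip (v # ys) (ys @ [v])"
  have "length ys \<le> n - 1"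
    using ys v distinct_card[of ys] card_mono[of "{1..n} - {v}" "set ys"] by simp
  then have "n - length ?ps = n - 1 - length ys" by simp
  moreover have "map (d \<circ> snd) ?ps = map d (ys @ [v])"
    unfolding map_map[symmetric] by (subst map_snd_zip) auto
  then have "prod_list (map (d \<circ> snd) ?ps) = d v * (\<Prod>i\<in>set ys. d i)"
    using ys by (simp add: prod.distinct_set_conv_list)
  moreover have "card {f \<in> fibre_maps {1..n} {1..n} d. \<forall>(x, y)\<in>set ?ps. f x = y} * fact n
      = prod_list (map (d \<circ> snd) ?ps) * card (fibre_maps {1..n} {1..n} d) * fact (n - length ?ps)"
    using card_fibre_maps_prescribed[of "{1..n}" "{1..n}" ?ps d] v ys by auto
  ultimately have "card {f \<in> fibre_maps {1..n} {1..n} d. \<forall>(x, y)\<in>set ?ps. f x = y} * fact n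
      = d v * (\<Prod>i\<in>set ys. d i) * card (fibre_maps {1..n} {1..n} d) * fact (n - 1 - length ys)"
    by simp
  then show ?thesis
    using arg_cong[of _ _ real] by fastforce
qed

lemma prob_tail0_le_sum:
  fixes d :: "nat \<Rightarrow> nat"
  assumes v: "v \<in> {1..n}"
  shows "prob_tail0 n d v \<le> real (d v) * (\<Sum>ys | distinct ys \<and> set ys \<subseteq> {1..n} - {v}.
      (\<Prod>i\<in>set ys. real (d i)) * fact (n - 1 - length ys) / fact n)"
proof -
  define F where "F = fibre_maps {1..n} {1..n} d"
  define L where "L = {ys. distinct ys \<and> set ys \<subseteq> {1..n} - {v}}"
  define p where "p ys = real (d v) * ((\<Prod>i\<in>set ys. real (d i)) * fact (n - 1 - length ys) / fact n)"
    for ys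
  have "finite F"
    unfolding F_def by (rule finite_fibre_maps) auto
  moreover have "f ` {1..n} \<subseteq> {1..n}" if "f \<in> F" for f
    using that by (auto simp: F_def fibre_maps_def)
  ultimately have "card {f \<in> F. tail_len f v = 0}
      \<le> (\<Sum>ys\<in>L. card {f \<in> F. \<forall>(x, y)\<in>set (zip (v # ys) (ys @ [v])). f x = y})"
    unfolding L_def using v by (intro card_tail_len_0_le) auto
  then have "real (card {f \<in> F. tail_len f v = 0})
      \<le> real (\<Sum>ys\<in>L. card {f \<in> F. \<forall>(x, y)\<in>set (zip (v # ys) (ys @ [v])). f x = y})"
    by (simp only: of_nat_le_iff)
  also have "\<dots> = real (card F) * (\<Sum>ys\<in>L. p ys)"
  proof -
    have "real (card {f \<in> F. \<forall>(x, y)\<in>set (zip (v # ys) (ys @ [v])). f x = y}) = real (card F) * p ys"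
      if "ys \<in> L" for ys
      using card_fibre_maps_cycle[OF v, of ys d] that
      unfolding F_def L_def p_def by (simp add: field_simps)
    then show ?thesis
      by (simp add: sum_distrib_left)
  qed
  finally have "real (card {f \<in> F. tail_len f v = 0}) \<le> real (card F) * (\<Sum>ys\<in>L. p ys)" .
  moreover have "0 \<le> p ys" for ys
    unfolding p_def by (intro mult_nonneg_nonneg divide_nonneg_pos prod_nonneg) auto
  ultimately have "prob_tail0 n d v \<le> (\<Sum>ys\<in>L. p ys)"
    unfolding prob_tail0_def deg_funs_eq_fibre_maps F_def[symmetric]
    by (cases "card F = 0") (simp_all add: sum_nonneg divide_le_eq mult.commute)
  then show ?thesis
    unfolding p_def L_def by (simp add: sum_distrib_left)
qed

lemma le_Delta: "i \<in> {1..n} \<Longrightarrow> d i \<le> Delta n d"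
  unfolding Delta_def by (rule Max_ge) auto

lemma one_le_Delta:
  assumes "is_degree_seq n d" and "1 \<le> n"
  shows "1 \<le> Delta n d"
proof (rule ccontr)
  assume "\<not> 1 \<le> Delta n d"
  then have "(\<Sum>i=1..n. d i) = 0" using le_Delta[of _ n d] by fastforce
  then show False using assms by (simp add: is_degree_seq_def)
qed

lemma degree_le: "is_degree_seq n d \<Longrightarrow> i \<in> {1..n} \<Longrightarrow> d i \<le> n"
  using member_le_sum[of i "{1..n}" d] by (simp add: is_degree_seq_def)

lemma n_mul_sigma2:
  assumes "is_degree_seq n d"
  shows "real n * sigma2 n d = (\<Sum>i=1..n. (real (d i) - 1)^2)"
proof (cases "n = 0")
  case False
  have "(\<Sum>i=1..n. real (d i)) = real n"
    using assms by (simp add: is_degree_seq_def flip: of_nat_sum)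
  then have "(\<Sum>i=1..n. (real (d i) - 1)^2) = (\<Sum>i=1..n. real (d i)^2) - real n"
    by (simp add: power2_diff sum.distrib sum_subtractf flip: sum_distrib_left)
  moreover have "real n * sigma2 n d = (\<Sum>i=1..n. real (d i)^2) - real n"
    using False by (simp add: sigma2_def field_simps)
  ultimately show ?thesis by simp
qed simp

lemma prob_tail0_le:
  fixes d :: "nat \<Rightarrow> nat" and D B :: real
  assumes v: "v \<in> {1..n}" and deg: "is_degree_seq n d"
    and D: "1 \<le> D" "\<And>i. i \<in> {1..n} \<Longrightarrow> real (d i) \<le> D"
    and B_def: "B = (\<Sum>i\<in>{1..n} - {v}. (real (d i) - 1)^2)" and B: "0 < B"
  shows "prob_tail0 n d v \<le> real (d v) * (pi / sqrt B + exp (- (B / (4 * D^2))))"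
proof (cases "d v = 0")
  case True
  then show ?thesis using prob_tail0_le_sum[OF v, of d] by simp
next
  case False
  define M where "M = {1..n} - {v}"
  define I where "I = (\<Sum>ys | distinct ys \<and> set ys \<subseteq> M.
      (\<Prod>i\<in>set ys. real (d i)) * fact (n - 1 - length ys) / fact n)"
  have M: "finite M" "card M = n - 1" and n: "1 \<le> n"
    using v by (auto simp: M_def)
  have "I = (\<Sum>ys | distinct ys \<and> set ys \<subseteq> M.
      (\<Prod>i\<in>set ys. real (d i)) * fact (n - 1 - card (set ys)) / fact n)"
    unfolding I_def by (intro sum.cong refl) (simp add: distinct_card)
  also have "\<dots> = (\<Sum>J\<in>Pow M.
      (\<Prod>i\<in>J. real (d i)) * (fact (card J) * fact (card M - card J) / fact (card M + 1)))"
    using sum_distinct_lists_eq_sum_Pow[OF M(1),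
        of "\<lambda>J. (\<Prod>i\<in>J. real (d i)) * fact (n - 1 - card J) / fact n"] M n
    by (simp add: mult_ac)
  finally have I: "((\<lambda>t. \<Prod>i\<in>M. real (d i) * t + (1 - t)) has_integral I) {0..1}"
    using has_integral_prod_affine[OF M(1), of "\<lambda>i. real (d i)"] by simp
  have "(\<Sum>i\<in>{1..n}. real (d i)) = real n"
    using deg by (simp add: is_degree_seq_def flip: of_nat_sum)
  then have "(\<Sum>i\<in>M. real (d i) - 1) = 1 - real (d v)"
    using v M n by (simp add: M_def sum_diff1 sum_subtractf of_nat_diff)
  then have mean: "(\<Sum>i\<in>M. real (d i) - 1) \<le> 0"
    using False by simp
  have w: "0 \<le> real (d i) \<and> real (d i) \<le> D" if "i \<in> M" for i
    using D(2) that by (simp add: M_def)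
  have "prob_tail0 n d v \<le> real (d v) * I"
    using prob_tail0_le_sum[OF v, of d] unfolding I_def M_def .
  also have "\<dots> \<le> real (d v) * (pi / sqrt B + exp (- (B / (4 * D^2))))"
    using integral_prod_affine_le[OF M(1) w D(1) mean B_def[folded M_def] B I] by (simp add: mult_left_mono)
  finally show ?thesis .
qed

lemma prob_tail0_le_Delta:
  fixes d :: "nat \<Rightarrow> nat" and c K :: real
  assumes v: "v \<in> {1..n}" and deg: "is_degree_seq n d"
    and c: "0 < c" "c \<le> 1/3" and K: "1 \<le> K"
    and Delta: "real (Delta n d)^2 * K \<le> c^2 * (real n * sigma2 n d)"
  shows "prob_tail0 n d v \<le> pi * sqrt 2 * c + real n * exp (- K)"
proof -
  define D where "D = real (Delta n d)"
  define Q where "Q = real n * sigma2 n d"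
  define B where "B = (\<Sum>i\<in>{1..n} - {v}. (real (d i) - 1)^2)"
  have d_le_D: "real (d i) \<le> D" if "i \<in> {1..n}" for i
    using le_Delta[OF that] by (simp add: D_def)
  have D1: "1 \<le> D"
    using one_le_Delta[OF deg] v by (simp add: D_def)
  have Q_eq: "Q = B + (real (d v) - 1)^2"
    unfolding Q_def B_def n_mul_sigma2[OF deg] using v by (simp add: sum_diff1)
  have "0 \<le> B" unfolding B_def by (simp add: sum_nonneg)
  have "D^2 \<le> D^2 * K" using K by (simp add: mult_le_cancel_left1)
  with Delta have DQ: "D^2 \<le> c^2 * Q" unfolding D_def Q_def by linarith
  have "c^2 \<le> (1/3)^2" using c by (intro power_mono) auto
  moreover have Q0: "0 \<le> Q" using Q_eq \<open>0 \<le> B\<close> by simp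
  ultimately have "c^2 * Q \<le> (1/3)^2 * Q" by (rule mult_right_mono)
  then have cQ: "c^2 * Q \<le> Q / 9" by (simp add: power2_eq_square)
  have "(real (d v) - 1)^2 \<le> D^2"
    using d_le_D[OF v] D1 by (intro power2_le_iff_abs_le[THEN iffD2]) auto
  then have B_ge: "Q / 2 \<le> B" using Q_eq DQ cQ Q0 by linarith
  have "1 \<le> D^2" using D1 by simp
  then have B: "0 < B" using B_ge DQ cQ by linarith
  have "c^2 * Q \<le> c^2 * (2 * B)" using B_ge by (intro mult_left_mono) auto
  then have "sqrt (D^2) \<le> sqrt (2 * c^2 * B)"
    using DQ by (intro real_sqrt_le_mono) (simp add: mult.assoc mult.left_commute)
  then have "real (d v) \<le> sqrt 2 * c * sqrt B"
    using d_le_D[OF v] D1 c by (simp add: real_sqrt_mult)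
  then have first: "real (d v) / sqrt B \<le> sqrt 2 * c"
    using B by (simp add: divide_le_eq)
  have "4 * (D^2 * K) \<le> B"
    using Delta[folded D_def Q_def] cQ B_ge \<open>0 \<le> B\<close> by linarith
  then have "K \<le> B / (4 * D^2)"
    using D1 by (simp add: le_divide_eq mult_ac)
  then have second: "real (d v) * exp (- (B / (4 * D^2))) \<le> real n * exp (- K)"
    using degree_le[OF deg v] by (intro mult_mono) auto
  have "prob_tail0 n d v \<le> real (d v) * (pi / sqrt B + exp (- (B / (4 * D^2))))"
    using prob_tail0_le[OF v deg D1 d_le_D B_def B] .
  also have "\<dots> = pi * (real (d v) / sqrt B) + real (d v) * exp (- (B / (4 * D^2)))"
    by (simp add: algebra_simps)
  also have "\<dots> \<le> pi * (sqrt 2 * c) + real n * exp (- K)"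
    using first second by (intro add_mono mult_left_mono) auto
  finally show ?thesis by (simp add: mult.assoc)
qed

lemma sq_mul_le_of_le_abs_sqrt:
  fixes x y c K :: real
  assumes "0 \<le> x" "0 \<le> y" "0 < K" and "x \<le> c * \<bar>sqrt (y / K)\<bar>"
  shows "x^2 * K \<le> c^2 * y"
proof -
  have "x^2 \<le> (c * \<bar>sqrt (y / K)\<bar>)^2"
    using assms by (intro power_mono) auto
  also have "\<dots> = c^2 * y / K"
    using assms by (simp add: power_mult_distrib)
  finally show ?thesis
    using assms by (simp add: le_divide_eq)
qed

lemma prob_tail0_le_log:
  fixes d :: "nat \<Rightarrow> nat" and c :: real
  assumes n: "3 \<le> n" and v: "v \<in> {1..n}" and deg: "is_degree_seq n d" and c: "0 < c" "c \<le> 1/3"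
    and Delta: "real (Delta n d) \<le> c * \<bar>sqrt (real n * sigma2 n d / ln (real n) ^ 3)\<bar>"
  shows "prob_tail0 n d v \<le> pi * sqrt 2 * c + real n * exp (- (ln (real n) ^ 3))"
proof -
  have "exp 1 \<le> real n" using exp_le n by simp
  then have L: "1 \<le> ln (real n)" using n by (simp add: ln_ge_iff)
  have "0 \<le> real n * sigma2 n d" by (simp add: n_mul_sigma2[OF deg] sum_nonneg)
  then have "real (Delta n d)^2 * ln (real n) ^ 3 \<le> c^2 * (real n * sigma2 n d)"
    using Delta L by (intro sq_mul_le_of_le_abs_sqrt) auto
  then show ?thesis
    using L by (intro prob_tail0_le_Delta[OF v deg c]) auto
qed

lemma pi_mult_sqrt_2_less_6: "pi * sqrt 2 < 6"
proof -
  have "sqrt 2 < 3/2" by (rule real_less_lsqrt) (auto simp: power2_eq_square)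
  then have "pi * sqrt 2 < 4 * (3/2)"
    using pi_less_4 by (intro mult_strict_mono) auto
  then show ?thesis by simp
qed

theorem corollary3p14:
  fixes d :: "nat \<Rightarrow> nat \<Rightarrow> nat" and v :: "nat \<Rightarrow> nat"
  assumes deg: "\<And>n. is_degree_seq n (d n)"
    and vn: "\<And>n. n \<ge> 1 \<Longrightarrow> v n \<in> {1..n}"
    and s_upper: "(\<lambda>n. sigma2 n (d n)) \<in> o(\<lambda>n. real n / (ln (real n)) ^ 3)"
    and s_lower: "(\<lambda>n. ln (real n) / real n powr (1/3)) \<in> o(\<lambda>n. sigma2 n (d n))"
    and Delta_bound: "(\<lambda>n. real (Delta n (d n))) \<in>
        o(\<lambda>n. sqrt (real n * sigma2 n (d n) / (ln (real n)) ^ 3))"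
  shows "(\<lambda>n. prob_tail0 n (d n) (v n)) \<longlonglongrightarrow> 0"
proof (rule tendstoI)
  fix e :: real assume e: "0 < e"
  define c where "c = min (1/3) (e / 20)"
  have c: "0 < c" "c \<le> 1/3" using e by (auto simp: c_def)
  have "pi * sqrt 2 * c \<le> 6 * c"
    using pi_mult_sqrt_2_less_6 c by (intro mult_right_mono) auto
  moreover have "c \<le> e / 20" by (simp add: c_def)
  ultimately have "pi * sqrt 2 * c < e / 2"
    using e by linarith
  have "(\<lambda>n::nat. real n * exp (- (ln (real n) ^ 3))) \<longlonglongrightarrow> 0"
    by real_asymp
  then have "eventually (\<lambda>n. real n * exp (- (ln (real n) ^ 3)) < e / 2) sequentially"
    using e by (intro order_tendstoD(2)) auto
  moreover have "eventually (\<lambda>n. real (Delta n (d n))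
      \<le> c * \<bar>sqrt (real n * sigma2 n (d n) / ln (real n) ^ 3)\<bar>) sequentially"
    using landau_o.smallD[OF Delta_bound c(1)] by simp
  ultimately show "eventually (\<lambda>n. dist (prob_tail0 n (d n) (v n)) 0 < e) sequentially"
    using eventually_ge_at_top[of 3]
  proof eventually_elim
    case (elim n)
    then have "prob_tail0 n (d n) (v n) \<le> pi * sqrt 2 * c + real n * exp (- (ln (real n) ^ 3))"
      using vn[of n] by (intro prob_tail0_le_log[OF _ _ deg c]) auto
    moreover have "0 \<le> prob_tail0 n (d n) (v n)" by (simp add: prob_tail0_def)
    ultimately show ?case using \<open>pi * sqrt 2 * c < e / 2\<close> elim(1) by simp
  qed
qed

end
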